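(* Let $A \in \mathbb{R}^{n\times n}$ be symmetric positive definite with smallest eigenvalue $\alpha>0$ and largest eigenvalue $\beta$. Let $\xi \ge 0$, $\eta = \frac{1}{1+\xi}$, and $\zeta = \frac{2\eta}{\alpha+\beta}$. Let $f(t) = 2t - t^2$ and $P_1 = 2\zeta I - \zeta^2 A$. Set $\hat\alpha_\eta = \frac{2\eta\alpha}{\alpha+\beta}$ and $\hat\beta_\eta = \frac{2\eta\beta}{\alpha+\beta}$, and assume $\hat \alpha_\eta + 2(1 - \eta) < 1$. Denote by $$\hat \alpha_\eta = \lambda_1^{(0)} \le \lambda_2^{(0)} \le \ldots \le \lambda_n^{(0)} = \hat \beta_\eta$$ the eigenvalues of the scaled matrix $\zeta A$, and by $$\lambda_1^{(1)} \le \lambda_2^{(1)} \le \ldots \le \lambda_n^{(1)}$$ the eigenvalues of $P_1 A$ (counted with multiplicity). Let $k$ be the integer satisfying $\lambda_k^{(0)} \le \hat \alpha_\eta + 2(1 - \eta) \le \lambda_{k+1}^{(0)}$. Then $$\lambda_j^{(1)} = f(\lambda_j^{(0)}), \qquad j = 1, \ldots, k.$$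
   Context: Note that $P_1 A = 2\zeta A - \zeta^2 A^2 = f(\zeta A)$, i.e. $P_1$ is the first step of the scaled Newton (Hotelling) iteration for $A^{-1}$ started from $P_0 = I$, with the scaling $\zeta = 2/((\alpha+\beta)(1+\xi))$ obtained by enlarging the usual parameter $\theta = (\alpha+\beta)/2$ to $\bar\theta = \theta(1+\xi)$. *)

theory Defs
  imports "Jordan_Normal_Form.Char_Poly" "HOL-Library.Multiset"
begin

definition spd_mat :: "nat \<Rightarrow> real mat \<Rightarrow> bool" where
  "spd_mat n A \<longleftrightarrow> A \<in> carrier_mat n n \<and> transpose_mat A = A \<and>
     (\<forall>x \<in> carrier_vec n. x \<noteq> 0\<^sub>v n \<longrightarrow> x \<bullet> (A *\<^sub>v x) > 0)"

text \<open>Eigenvalues counted with algebraic multiplicity (roots of the characteristic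
  polynomial), sorted increasingly; entry i of the list is lambda_(i+1).\<close>
definition eigs :: "real mat \<Rightarrow> real list" where
  "eigs A = sorted_list_of_multiset (proots (char_poly A))"

definition f_newton :: "real \<Rightarrow> real" where
  "f_newton t = 2 * t - t^2"

end

theory Submission
  imports Defs "Jordan_Normal_Form.Schur_Decomposition"
begin

(* Since P_1 A = 2 (zeta A) - (zeta A)^2 = f (zeta A), a Schur triangularisation of A
   triangularises zeta A and P_1 A simultaneously, so the eigenvalues of P_1 A are the values
   f mu_i at the eigenvalues mu_1 <= ... <= mu_n of zeta A; these are real and positive
   because A is symmetric positive definite.  Write c = alpha_eta + 2 (1 - eta); then
   mu_n = beta_eta = 2 - c.  As f increases on ]-oo, 1] and is symmetric about 1,
   f mu_1 <= ... <= f mu_k <= f c <= f mu_i for every i > k, so the k smallest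
   eigenvalues of P_1 A are f mu_1, ..., f mu_k, in this order. *)

lemma real_symmetric_eigenvalue_real:
  fixes A :: "real mat"
  assumes A: "A \<in> carrier_mat n n" and sym: "transpose_mat A = A"
    and ev: "eigenvector (map_mat complex_of_real A) v a"
  shows "a \<in> \<real>"
proof -
  let ?C = "map_mat complex_of_real A"
  have C: "?C \<in> carrier_mat n n" using A by simp
  have v: "v \<in> carrier_vec n" and v0: "v \<noteq> 0\<^sub>v n" and Cv: "?C *\<^sub>v v = a \<cdot>\<^sub>v v"
    using ev A unfolding eigenvector_def by auto
  have symC: "transpose_mat ?C = ?C"
  proof (rule eq_matI)
    fix i j assume "i < dim_row ?C" "j < dim_col ?C"
    then show "transpose_mat ?C $$ (i, j) = ?C $$ (i, j)"
      using A by (subst sym[symmetric]) simp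
  qed (use A in auto)
  have conj_Cv: "conjugate (?C *\<^sub>v v) = ?C *\<^sub>v conjugate v"
    using A v by (intro eq_vecI) (auto simp: scalar_prod_def)
  have "a * (v \<bullet>c v) = (?C *\<^sub>v v) \<bullet>c v"
    using Cv v by simp
  also have "\<dots> = v \<bullet> (?C *\<^sub>v conjugate v)"
    using transpose_vec_mult_scalar[OF C, of "conjugate v" v] v symC by simp
  also have "\<dots> = v \<bullet>c (a \<cdot>\<^sub>v v)"
    by (simp only: conj_Cv[symmetric] Cv)
  also have "\<dots> = cnj a * (v \<bullet>c v)"
    using v by (simp add: conjugate_smult_vec)
  finally have "cnj a = a"
    using v v0 by simp
  then show ?thesis
    using Reals_cnj_iff by blast
qed

lemma char_poly_real_symmetric_factorized:
  fixes A :: "real mat"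
  assumes A: "A \<in> carrier_mat n n" and sym: "transpose_mat A = A"
  obtains rs where "char_poly A = (\<Prod>r\<leftarrow>rs. [:-r, 1:])" and "length rs = n" and "sorted rs"
proof -
  interpret of_real_poly_hom: map_poly_inj_comm_ring_hom "complex_of_real" ..
  let ?C = "map_mat complex_of_real A"
  have C: "?C \<in> carrier_mat n n" using A by simp
  obtain as where as: "char_poly ?C = (\<Prod>a\<leftarrow>as. [:-a, 1:])" and len: "length as = n"
    using char_poly_factorized[OF C] by blast
  have "a \<in> \<real>" if "a \<in> set as" for a
  proof -
    have "eigenvalue ?C a"
      using that unfolding eigenvalue_root_char_poly[OF C] as
      by (simp add: poly_prod_list prod_list_zero_iff)
    then obtain v where "eigenvector ?C v a" unfolding eigenvalue_def by blast
    then show ?thesis by (rule real_symmetric_eigenvalue_real[OF A sym])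
  qed
  then have as_real: "as = map complex_of_real (map Re as)"
    by (induction as) auto
  define rs where "rs = sort (map Re as)"
  have "map_poly complex_of_real (char_poly A) = (\<Prod>r\<leftarrow>map Re as. map_poly of_real [:-r, 1:])"
    using as by (subst (asm) as_real) (simp add: of_real_hom.char_poly_hom[OF A] o_def)
  also have "\<dots> = map_poly complex_of_real (\<Prod>r\<leftarrow>map Re as. [:-r, 1:])"
    by (simp only: of_real_poly_hom.hom_prod_list map_map o_def)
  also have "(\<Prod>r\<leftarrow>map Re as. [:-r, 1:]) = (\<Prod>r\<leftarrow>rs. [:-r, 1:])"
    unfolding rs_def by (simp flip: prod_mset_prod_list add: image_mset.compositionality)
  finally have "char_poly A = (\<Prod>r\<leftarrow>rs. [:-r, 1:])" by simp
  moreover have "length rs = n" "sorted rs" using len by (simp_all add: rs_def)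
  ultimately show thesis by (rule that)
qed

lemma eigenvalue_pos_if_pos_definite:
  fixes A :: "real mat"
  assumes A: "A \<in> carrier_mat n n"
    and pd: "\<forall>x \<in> carrier_vec n. x \<noteq> 0\<^sub>v n \<longrightarrow> x \<bullet> (A *\<^sub>v x) > 0"
    and ev: "eigenvalue A r"
  shows "r > 0"
proof -
  obtain x where "eigenvector A x r" using ev unfolding eigenvalue_def by blast
  then have x: "x \<in> carrier_vec n" "x \<noteq> 0\<^sub>v n" and Ax: "A *\<^sub>v x = r \<cdot>\<^sub>v x"
    using A unfolding eigenvector_def by auto
  have "0 < x \<bullet> (A *\<^sub>v x)" using pd x by blast
  also have "\<dots> = r * (x \<bullet> x)" using x Ax by simp
  finally show ?thesis
    using conjugate_square_ge_0_vec[of x] by (simp add: zero_less_mult_iff)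
qed

lemma spd_mat_char_poly_factorized:
  assumes "spd_mat n A"
  obtains rs where "char_poly A = (\<Prod>r\<leftarrow>rs. [:-r, 1:])" and "length rs = n" and "sorted rs"
    and "\<forall>r \<in> set rs. r > 0"
proof -
  have A: "A \<in> carrier_mat n n" and sym: "transpose_mat A = A"
    and pd: "\<forall>x \<in> carrier_vec n. x \<noteq> 0\<^sub>v n \<longrightarrow> x \<bullet> (A *\<^sub>v x) > 0"
    using assms unfolding spd_mat_def by auto
  obtain rs where cp: "char_poly A = (\<Prod>r\<leftarrow>rs. [:-r, 1:])" and "length rs = n" "sorted rs"
    by (rule char_poly_real_symmetric_factorized[OF A sym])
  moreover have "\<forall>r \<in> set rs. r > 0"
    by (intro ballI eigenvalue_pos_if_pos_definite[OF A pd])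
      (simp add: eigenvalue_root_char_poly[OF A] cp poly_prod_list prod_list_zero_iff)
  ultimately show thesis by (rule that)
qed

lemma eigs_eq_sort:
  assumes "char_poly M = (\<Prod>r\<leftarrow>rs. [:-r, 1:])"
  shows "eigs M = sort rs"
proof -
  have "proots (\<Prod>r\<leftarrow>rs. [:-r, 1:]) = mset rs"
  proof (induction rs)
    case (Cons a rs)
    have "(\<Prod>r\<leftarrow>rs. [:-r, 1:]) \<noteq> 0" by (auto simp: prod_list_zero_iff)
    then show ?case using Cons by (simp add: proots_mult del: mult_pCons_left)
  qed simp
  then show ?thesis unfolding eigs_def assms by simp
qed

lemma eigs_similar_upper_triangular:
  assumes "similar_mat M T" and "T \<in> carrier_mat n n" and "upper_triangular T"
  shows "eigs M = sort (diag_mat T)"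
  using assms by (intro eigs_eq_sort) (simp add: char_poly_similar char_poly_upper_triangular)

lemma similar_mat_wit_diff:
  fixes A :: "'a :: comm_ring_1 mat"
  assumes "similar_mat_wit A B P Q" and "similar_mat_wit A' B' P Q"
    and "A \<in> carrier_mat n n" and "A' \<in> carrier_mat n n"
  shows "similar_mat_wit (A - A') (B - B') P Q"
proof -
  from similar_mat_witD2[OF assms(3,1)] similar_mat_witD2[OF assms(4,2)]
  have wit: "P * Q = 1\<^sub>m n" "Q * P = 1\<^sub>m n" "A = P * B * Q" "A' = P * B' * Q"
    and carr: "B \<in> carrier_mat n n" "B' \<in> carrier_mat n n" "P \<in> carrier_mat n n" "Q \<in> carrier_mat n n"
    by auto
  have "P * (B - B') * Q = P * B * Q - P * B' * Q"
    using carr by (simp add: mult_minus_distrib_mat[of _ n n] minus_mult_distrib_mat[of _ n n] assoc_mult_mat[of _ n n])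
  then have "A - A' = P * (B - B') * Q"
    by (simp add: wit(3,4))
  then show ?thesis using wit carr by (intro similar_mat_witI[of _ _ n]) auto
qed

lemma newton_step_mat_eq:
  fixes M :: "'a :: comm_ring_1 mat"
  assumes "M \<in> carrier_mat n n"
  shows "(c \<cdot>\<^sub>m 1\<^sub>m n - d \<cdot>\<^sub>m M) * M = c \<cdot>\<^sub>m M - d \<cdot>\<^sub>m (M ^\<^sub>m 2)"
  using assms by (simp add: minus_mult_distrib_mat[of _ n n] mult_smult_assoc_mat[of _ n n] numeral_2_eq_2)

lemma similar_mat_wit_newton_step:
  fixes A :: "'a :: comm_ring_1 mat"
  assumes "similar_mat_wit A B P Q" and "A \<in> carrier_mat n n"
  shows "similar_mat_wit ((c \<cdot>\<^sub>m 1\<^sub>m n - d \<cdot>\<^sub>m A) * A) ((c \<cdot>\<^sub>m 1\<^sub>m n - d \<cdot>\<^sub>m B) * B) P Q"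
proof -
  have B: "B \<in> carrier_mat n n" using similar_mat_witD2[OF assms(2,1)] by auto
  show ?thesis
    unfolding newton_step_mat_eq[OF assms(2)] newton_step_mat_eq[OF B]
    by (rule similar_mat_wit_diff[of _ _ _ _ _ _ n])
      (use assms in \<open>auto intro: similar_mat_wit_smult similar_mat_wit_pow\<close>)
qed

lemma upper_triangular_mult:
  fixes X Y :: "'a :: semiring_0 mat"
  assumes X: "X \<in> carrier_mat n n" and Y: "Y \<in> carrier_mat n n"
    and "upper_triangular X" and "upper_triangular Y"
  shows "upper_triangular (X * Y)"
    and "i < n \<Longrightarrow> (X * Y) $$ (i, i) = X $$ (i, i) * Y $$ (i, i)"
proof -
  have zero: "X $$ (i, k) * Y $$ (k, j) = 0" if "i < n" "k < n" "j < i" for i j k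
    using that X Y by (cases "k < i") (simp_all add: upper_triangularD[OF assms(3)] upper_triangularD[OF assms(4)])
  have entry: "(X * Y) $$ (i, j) = (\<Sum>k\<in>{0..<n}. X $$ (i, k) * Y $$ (k, j))" if "i < n" "j < n" for i j
    using that X Y by (simp add: scalar_prod_def)
  show "upper_triangular (X * Y)"
  proof (rule upper_triangularI)
    fix i j assume "j < i" "i < dim_row (X * Y)"
    then show "(X * Y) $$ (i, j) = 0"
      using X by (simp add: entry zero del: index_mult_mat(1))
  qed
  assume i: "i < n"
  have "(X * Y) $$ (i, i) = (\<Sum>k\<in>{0..<n}. if k = i then X $$ (i, i) * Y $$ (i, i) else 0)"
    unfolding entry[OF i i]
  proof (rule sum.cong)
    fix k assume "k \<in> {0..<n}"
    then show "X $$ (i, k) * Y $$ (k, i) = (if k = i then X $$ (i, i) * Y $$ (i, i) else 0)"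
      using i X Y by (cases "k < i") (simp_all add: upper_triangularD[OF assms(3)] upper_triangularD[OF assms(4)])
  qed simp
  also have "\<dots> = X $$ (i, i) * Y $$ (i, i)" using i by simp
  finally show "(X * Y) $$ (i, i) = X $$ (i, i) * Y $$ (i, i)" .
qed

lemma upper_triangular_newton_step:
  fixes B :: "'a :: comm_ring_1 mat"
  assumes B: "B \<in> carrier_mat n n" and ut: "upper_triangular B"
  shows "upper_triangular ((c \<cdot>\<^sub>m 1\<^sub>m n - d \<cdot>\<^sub>m B) * B)"
    and "diag_mat ((c \<cdot>\<^sub>m 1\<^sub>m n - d \<cdot>\<^sub>m B) * B) = map (\<lambda>b. (c - d * b) * b) (diag_mat B)"
proof -
  let ?X = "c \<cdot>\<^sub>m 1\<^sub>m n - d \<cdot>\<^sub>m B"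
  have X: "?X \<in> carrier_mat n n" using B by (intro minus_carrier_mat smult_carrier_mat) auto
  have utX: "upper_triangular ?X" using B ut by (auto simp: upper_triangular_def)
  show "upper_triangular (?X * B)" by (rule upper_triangular_mult(1)[OF X B utX ut])
  show "diag_mat (?X * B) = map (\<lambda>b. (c - d * b) * b) (diag_mat B)"
    using B by (auto simp: diag_mat_def upper_triangular_mult(2)[OF X B utX ut] simp del: index_mult_mat(1))
qed

lemma schur_triangularization:
  fixes A :: "real mat"
  assumes A: "A \<in> carrier_mat n n" and cp: "char_poly A = (\<Prod>r\<leftarrow>rs. [:-r, 1:])"
  obtains B P Q where "similar_mat_wit A B P Q" and "B \<in> carrier_mat n n"
    and "upper_triangular B" and "diag_mat B = rs"
proof -
  obtain B P Q where "schur_decomposition A rs = (B, P, Q)" by (cases "schur_decomposition A rs")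
  then have "similar_mat_wit A B P Q" "upper_triangular B" "diag_mat B = rs"
    using schur_decomposition[OF A cp] by auto
  moreover have "B \<in> carrier_mat n n" using similar_mat_witD2[OF A \<open>similar_mat_wit A B P Q\<close>] by auto
  ultimately show thesis using that by blast
qed

lemma eigs_smult:
  fixes A :: "real mat"
  assumes A: "A \<in> carrier_mat n n" and cp: "char_poly A = (\<Prod>r\<leftarrow>rs. [:-r, 1:])"
  shows "eigs (c \<cdot>\<^sub>m A) = sort (map ((*) c) rs)"
proof -
  obtain B P Q where wit: "similar_mat_wit A B P Q" and B: "B \<in> carrier_mat n n"
    and ut: "upper_triangular B" and diag: "diag_mat B = rs"
    by (rule schur_triangularization[OF A cp])
  have "similar_mat (c \<cdot>\<^sub>m A) (c \<cdot>\<^sub>m B)"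
    using similar_mat_wit_smult[OF wit] unfolding similar_mat_def by blast
  moreover have "upper_triangular (c \<cdot>\<^sub>m B)" using ut B by (auto simp: upper_triangular_def)
  ultimately have "eigs (c \<cdot>\<^sub>m A) = sort (diag_mat (c \<cdot>\<^sub>m B))"
    using B by (intro eigs_similar_upper_triangular[of _ _ n]) auto
  also have "diag_mat (c \<cdot>\<^sub>m B) = map ((*) c) rs" using diag B by (auto simp: diag_mat_def)
  finally show ?thesis .
qed

lemma eigs_newton_step:
  fixes A :: "real mat"
  assumes A: "A \<in> carrier_mat n n" and cp: "char_poly A = (\<Prod>r\<leftarrow>rs. [:-r, 1:])"
  shows "eigs ((c \<cdot>\<^sub>m 1\<^sub>m n - d \<cdot>\<^sub>m A) * A) = sort (map (\<lambda>r. (c - d * r) * r) rs)"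
proof -
  obtain B P Q where wit: "similar_mat_wit A B P Q" and B: "B \<in> carrier_mat n n"
    and ut: "upper_triangular B" and diag: "diag_mat B = rs"
    by (rule schur_triangularization[OF A cp])
  have "similar_mat ((c \<cdot>\<^sub>m 1\<^sub>m n - d \<cdot>\<^sub>m A) * A) ((c \<cdot>\<^sub>m 1\<^sub>m n - d \<cdot>\<^sub>m B) * B)"
    using similar_mat_wit_newton_step[OF wit A] unfolding similar_mat_def by blast
  then have "eigs ((c \<cdot>\<^sub>m 1\<^sub>m n - d \<cdot>\<^sub>m A) * A) = sort (diag_mat ((c \<cdot>\<^sub>m 1\<^sub>m n - d \<cdot>\<^sub>m B) * B))"
    using B by (intro eigs_similar_upper_triangular[of _ _ n] upper_triangular_newton_step(1)[OF B ut])
      (auto intro!: mult_carrier_mat minus_carrier_mat)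
  then show ?thesis by (simp add: upper_triangular_newton_step(2)[OF B ut] diag)
qed

lemma nth_sort_map_sorted_prefix:
  fixes g :: "'a \<Rightarrow> 'b :: linorder"
  assumes "sorted (map g (take k xs))"
    and "\<And>x y. x \<in> set (take k xs) \<Longrightarrow> y \<in> set (drop k xs) \<Longrightarrow> g x \<le> g y"
    and "j < k" and "k \<le> length xs"
  shows "sort (map g xs) ! j = g (xs ! j)"
proof -
  have "sort (map g xs) = map g (take k xs) @ sort (map g (drop k xs))"
  proof (rule properties_for_sort)
    show "mset (map g (take k xs) @ sort (map g (drop k xs))) = mset (map g xs)"
      by (metis append_take_drop_id map_append mset_append mset_sort)
    show "sorted (map g (take k xs) @ sort (map g (drop k xs)))"
      using assms(1,2) by (auto simp: sorted_append)
  qed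
  then show ?thesis using assms(3,4) by (simp add: nth_append)
qed

lemma f_newton_diff: "f_newton y - f_newton x = (y - x) * (2 - x - y)"
  by (simp add: f_newton_def algebra_simps power2_eq_square)

lemma f_newton_mono_le_one: "x \<le> y \<Longrightarrow> y \<le> 1 \<Longrightarrow> f_newton x \<le> f_newton y"
  using f_newton_diff[of y x] mult_nonneg_nonneg[of "y - x" "2 - x - y"] by linarith

lemma f_newton_ge_between: "c \<le> y \<Longrightarrow> y \<le> 2 - c \<Longrightarrow> f_newton c \<le> f_newton y"
  using f_newton_diff[of y c] mult_nonneg_nonneg[of "y - c" "2 - c - y"] by linarith

lemma nth_sort_map_f_newton:
  fixes \<mu> :: "real list"
  assumes sorted: "sorted \<mu>" and "1 \<le> k" and "k < length \<mu>"
    and below: "\<mu> ! (k - 1) \<le> c" and above: "c \<le> \<mu> ! k" and "c < 1"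
    and top: "\<mu> ! (length \<mu> - 1) \<le> 2 - c"
    and "j < k"
  shows "sort (map f_newton \<mu>) ! j = f_newton (\<mu> ! j)"
proof (rule nth_sort_map_sorted_prefix)
  have prefix: "x \<le> c" if x: "x \<in> set (take k \<mu>)" for x
  proof -
    obtain i where "i < k" "x = \<mu> ! i" using x \<open>k < length \<mu>\<close> by (auto simp: in_set_conv_nth)
    moreover have "\<mu> ! i \<le> \<mu> ! (k - 1)"
      using \<open>i < k\<close> \<open>k < length \<mu>\<close> by (intro sorted_nth_mono[OF sorted]) auto
    ultimately show ?thesis using below by simp
  qed
  have suffix: "c \<le> y \<and> y \<le> 2 - c" if y: "y \<in> set (drop k \<mu>)" for y
  proof -
    obtain i where i: "i < length \<mu> - k" "y = \<mu> ! (k + i)" using y by (auto simp: in_set_conv_nth)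
    then have "\<mu> ! k \<le> \<mu> ! (k + i)" "\<mu> ! (k + i) \<le> \<mu> ! (length \<mu> - 1)"
      by (auto intro: sorted_nth_mono[OF sorted])
    then show ?thesis using i above top by simp
  qed
  show "sorted (map f_newton (take k \<mu>))"
    unfolding sorted_map
    by (rule sorted_wrt_mono_rel[OF _ sorted_wrt_take[OF sorted]])
      (use prefix \<open>c < 1\<close> in \<open>force intro: f_newton_mono_le_one\<close>)
  show "f_newton x \<le> f_newton y" if "x \<in> set (take k \<mu>)" "y \<in> set (drop k \<mu>)" for x y
  proof -
    have "f_newton x \<le> f_newton c" using prefix[OF that(1)] \<open>c < 1\<close> by (simp add: f_newton_mono_le_one)
    also have "\<dots> \<le> f_newton y"
      using suffix[OF that(2)] by (intro f_newton_ge_between) auto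
    finally show ?thesis .
  qed
qed (use assms in auto)

theorem theorem2p3:
  fixes n k :: nat and A :: "real mat" and \<alpha> \<beta> \<xi> \<eta> \<zeta> :: real
  assumes "n > 0"
    and "spd_mat n A"
    and "\<alpha> = eigs A ! 0" and "\<beta> = eigs A ! (n - 1)"
    and "\<xi> \<ge> 0" and "\<eta> = 1 / (1 + \<xi>)" and "\<zeta> = 2 * \<eta> / (\<alpha> + \<beta>)"
    and "2 * \<eta> * \<alpha> / (\<alpha> + \<beta>) + 2 * (1 - \<eta>) < 1"
    and "1 \<le> k" and "k + 1 \<le> n"
    and "eigs (\<zeta> \<cdot>\<^sub>m A) ! (k - 1) \<le> 2 * \<eta> * \<alpha> / (\<alpha> + \<beta>) + 2 * (1 - \<eta>)"
    and "2 * \<eta> * \<alpha> / (\<alpha> + \<beta>) + 2 * (1 - \<eta>) \<le> eigs (\<zeta> \<cdot>\<^sub>m A) ! k"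
  shows "\<forall>j \<in> {1..k}.
     eigs ((2 * \<zeta> \<cdot>\<^sub>m 1\<^sub>m n - \<zeta>^2 \<cdot>\<^sub>m A) * A) ! (j - 1)
       = f_newton (eigs (\<zeta> \<cdot>\<^sub>m A) ! (j - 1))"
proof -
  define c where "c = 2 * \<eta> * \<alpha> / (\<alpha> + \<beta>) + 2 * (1 - \<eta>)"
  obtain rs where cp: "char_poly A = (\<Prod>r\<leftarrow>rs. [:-r, 1:])" and len: "length rs = n"
    and "sorted rs" and pos: "\<forall>r \<in> set rs. r > 0"
    by (rule spd_mat_char_poly_factorized[OF \<open>spd_mat n A\<close>])
  have A: "A \<in> carrier_mat n n" using \<open>spd_mat n A\<close> unfolding spd_mat_def by simp
  have "eigs A = rs" using eigs_eq_sort[OF cp] \<open>sorted rs\<close> by (simp add: sorted_sort_id)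
  then have \<alpha>: "\<alpha> = rs ! 0" and \<beta>: "\<beta> = rs ! (n - 1)" using assms(3,4) by simp_all
  then have "\<alpha> > 0" "\<beta> > 0" using pos len \<open>n > 0\<close> by simp_all
  moreover have "\<eta> > 0" using assms(5,6) by simp
  ultimately have "\<zeta> > 0" and \<zeta>\<beta>: "\<zeta> * \<beta> = 2 - c"
    unfolding assms(7) c_def by (simp_all add: field_simps)
  define \<mu> where "\<mu> = map ((*) \<zeta>) rs"
  have "sorted \<mu>"
    using \<open>sorted rs\<close> \<open>\<zeta> > 0\<close> unfolding \<mu>_def sorted_map by (auto elim: sorted_wrt_mono_rel[rotated])
  then have eigs_\<zeta>A: "eigs (\<zeta> \<cdot>\<^sub>m A) = \<mu>"
    using eigs_smult[OF A cp] by (simp add: \<mu>_def sorted_sort_id)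
  have "eigs ((2 * \<zeta> \<cdot>\<^sub>m 1\<^sub>m n - \<zeta>^2 \<cdot>\<^sub>m A) * A) = sort (map f_newton \<mu>)"
    unfolding eigs_newton_step[OF A cp] \<mu>_def
    by (simp add: o_def f_newton_def algebra_simps power2_eq_square)
  moreover have "\<mu> ! (length \<mu> - 1) \<le> 2 - c"
    using \<zeta>\<beta> \<beta> len \<open>n > 0\<close> by (simp add: \<mu>_def)
  ultimately show ?thesis
    using nth_sort_map_f_newton[OF \<open>sorted \<mu>\<close> \<open>1 \<le> k\<close>] assms(8-12) len
    unfolding eigs_\<zeta>A c_def[symmetric] by (auto simp: \<mu>_def)
qed

end
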